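(* Let $m\geq 3$ and let $R(m,3)$ be the rectangular supergrid graph induced by $\{(x,y):1\leq x\leq m,\ 1\leq y\leq 3\}$. Let $z_1=(m,1)$, $z_2=(m,2)$, $z_3=(m,3)$, $e_{12}=(z_1,z_2)$ and $e_{23}=(z_2,z_3)$. If $s$ and $t$ are two distinct vertices of $R(m,3)$ with $\{s,t\}\cap\{z_1,z_2,z_3\}=\emptyset$, then there exists a Hamiltonian path of $R(m,3)$ from $s$ to $t$ that contains both edges $e_{12}$ and $e_{23}$.
   Context: The supergrid graph $S^\infty$ has vertex set $\mathbb{Z}^2$, two distinct vertices $u,v$ being adjacent iff $|u_x-v_x|\leq 1$ and $|u_y-v_y|\leq 1$; a supergrid graph is a finite vertex-induced subgraph of $S^\infty$. A Hamiltonian path from $s$ to $t$ is a simple path from $s$ to $t$ visiting every vertex exactly once. *)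

theory Defs
  imports Main
begin

type_synonym vertex = "int \<times> int"

definition sg_adj :: "vertex \<Rightarrow> vertex \<Rightarrow> bool" where
  "sg_adj u v \<longleftrightarrow> u \<noteq> v \<and> \<bar>fst u - fst v\<bar> \<le> 1 \<and> \<bar>snd u - snd v\<bar> \<le> 1"

definition rect :: "int \<Rightarrow> int \<Rightarrow> vertex set" where
  "rect m n = {(x, y). 1 \<le> x \<and> x \<le> m \<and> 1 \<le> y \<and> y \<le> n}"

definition ham_path :: "vertex set \<Rightarrow> vertex \<Rightarrow> vertex \<Rightarrow> vertex list \<Rightarrow> bool" where
  "ham_path V s t P \<longleftrightarrow> P \<noteq> [] \<and> distinct P \<and> set P = V \<and> hd P = s \<and> last P = t \<and>
     (\<forall>i. Suc i < length P \<longrightarrow> sg_adj (P ! i) (P ! Suc i))"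

definition path_has_edge :: "vertex list \<Rightarrow> vertex \<Rightarrow> vertex \<Rightarrow> bool" where
  "path_has_edge P u v \<longleftrightarrow>
     (\<exists>i. Suc i < length P \<and> ((P ! i = u \<and> P ! Suc i = v) \<or> (P ! i = v \<and> P ! Suc i = u)))"

end

theory Submission
  imports Defs "HOL-Library.Sublist" "HOL-Library.Product_Lexorder"
begin

(* Call a Hamiltonian path of the strip of columns a..b (rows 1..3) a boundary path if it uses
   a vertical edge (d, y)(d, y') in both boundary columns d = a and d = b. Such an edge can be
   replaced by the detour (d, y), (c, 1), (c, 2), (c, 3), (d, y') through a new neighbouring
   column c (read downwards if y' < y), so a boundary path extends to one of the strip with one
   more column. By induction on the width, boundary paths between any two vertices exist: if s
   and t avoid a boundary column, remove it, recurse and put it back; if they lie in opposite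
   boundary columns, join boundary paths of columns a..a+1 and a+2..b. Two-column strips, and
   the few pairs of a three-column strip that this recursion does not reach, are covered by
   explicit paths. For the theorem, take a boundary path of columns 1..m-1 and insert column m;
   its vertices then form a segment of the path. *)

lemma sg_adj_sym: "sg_adj u v \<Longrightarrow> sg_adj v u"
  by (auto simp: sg_adj_def)

lemma ham_path_iff:
  "ham_path V s t P \<longleftrightarrow>
     P \<noteq> [] \<and> distinct P \<and> set P = V \<and> hd P = s \<and> last P = t \<and> successively sg_adj P"
  by (simp add: ham_path_def successively_conv_nth)

lemma ham_path_iff_card:
  assumes "finite V"
  shows "ham_path V s t P \<longleftrightarrow>
           P \<noteq> [] \<and> distinct P \<and> set P \<subseteq> V \<and> length P = card V \<and>
           hd P = s \<and> last P = t \<and> successively sg_adj P"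
  using assms card_subset_eq[of V "set P"] distinct_card[of P] card_mono[of V "set P"]
  by (auto simp: ham_path_iff)

lemma ham_path_rev: "ham_path V s t P \<Longrightarrow> ham_path V t s (rev P)"
  by (auto simp: ham_path_iff hd_rev last_rev elim!: successively_mono intro: sg_adj_sym)

lemma ham_path_append:
  assumes "ham_path V s u P" "ham_path W v t Q" "V \<inter> W = {}" "sg_adj u v"
  shows "ham_path (V \<union> W) s t (P @ Q)"
  using assms by (auto simp: ham_path_iff successively_append_iff)

lemma ham_path_insert:
  assumes "ham_path V s t (P @ Q)" "P \<noteq> []" "Q \<noteq> []"
    and "ham_path W u v R" "V \<inter> W = {}" "sg_adj (last P) u" "sg_adj v (hd Q)"
  shows "ham_path (V \<union> W) s t (P @ R @ Q)"
  using assms by (auto simp: ham_path_iff successively_append_iff)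

lemma sublist_pair_conv_nth:
  "sublist [x, y] P \<longleftrightarrow> (\<exists>i. Suc i < length P \<and> P ! i = x \<and> P ! Suc i = y)"
proof
  assume "sublist [x, y] P"
  then obtain ps ss where "P = ps @ [x, y] @ ss"
    by (auto simp: sublist_def)
  then show "\<exists>i. Suc i < length P \<and> P ! i = x \<and> P ! Suc i = y"
    by (intro exI[of _ "length ps"]) (simp add: nth_append)
next
  assume "\<exists>i. Suc i < length P \<and> P ! i = x \<and> P ! Suc i = y"
  then obtain i where "Suc i < length P" "P ! i = x" "P ! Suc i = y"
    by blast
  then have "P = take i P @ [x, y] @ drop (Suc (Suc i)) P"
    by (metis Cons_nth_drop_Suc Suc_lessD append_Cons append_Nil append_take_drop_id)
  then show "sublist [x, y] P"
    by (metis sublist_appendI)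
qed

lemma path_has_edge_iff: "path_has_edge P u v \<longleftrightarrow> sublist [u, v] P \<or> sublist [v, u] P"
  unfolding path_has_edge_def sublist_pair_conv_nth by blast

lemma sublist_pair_insert:
  assumes "sublist [x, x'] (A @ u # v # B)" "(x, x') \<noteq> (u, v)"
  shows "sublist [x, x'] (A @ u # C @ v # B)"
proof -
  have "sublist [x, x'] (A @ [u]) \<or> sublist [x, x'] (v # B)"
    using assms sublist_append[of "[x, x']" "A @ [u]" "v # B"]
    by (auto simp: Cons_eq_append_conv suffix_def prefix_def)
  then show ?thesis
    by (metis append_Cons append_assoc append_self_conv2 sublist_append)
qed

definition strip :: "int \<Rightarrow> int \<Rightarrow> vertex set" where
  "strip a b = {a..b} \<times> {1..3}"

definition column_path :: "int \<Rightarrow> vertex list" where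
  "column_path c = [(c, 1), (c, 2), (c, 3)]"

definition has_column_edge :: "vertex list \<Rightarrow> int \<Rightarrow> bool" where
  "has_column_edge P c \<longleftrightarrow> (\<exists>y y'. sublist [(c, y), (c, y')] P)"

lemma atLeastAtMost_1_3_int: "{1..3} = {1, 2, 3 :: int}"
  by auto

lemma mem_strip_iff: "v \<in> strip a b \<longleftrightarrow> a \<le> fst v \<and> fst v \<le> b \<and> 1 \<le> snd v \<and> snd v \<le> 3"
  by (cases v) (simp add: strip_def)

lemma strip_rows: "snd ` strip a b \<subseteq> {1..3}"
  by (auto simp: strip_def)

lemma strip_split:
  assumes "a \<le> k + 1" "k \<le> b"
  shows "strip a k \<union> strip (k + 1) b = strip a b" "strip a k \<inter> strip (k + 1) b = {}"
  using assms by (auto simp: strip_def)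

lemma strip_column: "strip c c = set (column_path c)"
  by (auto simp: strip_def column_path_def atLeastAtMost_1_3_int)

lemma strip_two_columns: "strip a (a + 1) = {a, a + 1} \<times> {1, 2, 3}"
  by (auto simp: strip_def atLeastAtMost_1_3_int)

lemma strip_three_columns: "strip a (a + 2) = {a, a + 1, a + 2} \<times> {1, 2, 3}"
  by (auto simp: strip_def atLeastAtMost_1_3_int)

lemma has_column_edge_Cons_Cons:
  "has_column_edge (u # v # P) c \<longleftrightarrow> fst u = c \<and> fst v = c \<or> has_column_edge (v # P) c"
  by (cases u; cases v) (auto simp: has_column_edge_def sublist_Cons_right)

lemma has_column_edge_singleton: "\<not> has_column_edge [u] c"
  by (auto simp: has_column_edge_def sublist_Cons_right)

lemma has_column_edge_rev: "has_column_edge (rev P) c \<longleftrightarrow> has_column_edge P c"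
  unfolding has_column_edge_def sublist_rev_right by auto

lemma has_column_edge_append:
  "has_column_edge P c \<or> has_column_edge Q c \<Longrightarrow> has_column_edge (P @ Q) c"
  unfolding has_column_edge_def by (auto simp: sublist_append)

lemma has_column_edge_if_sublist_column_path:
  assumes "sublist (column_path c) P \<or> sublist (rev (column_path c)) P"
  shows "has_column_edge P c"
proof -
  have "sublist [(c, 1), (c, 2)] (column_path c)" "sublist [(c, 3), (c, 2)] (rev (column_path c))"
    by (simp_all add: column_path_def sublist_Cons_right)
  then show ?thesis
    using assms unfolding has_column_edge_def by (meson sublist_order.order.trans)
qed

lemma ham_path_column_path: "ham_path (strip c c) (c, 1) (c, 3) (column_path c)"
  by (simp add: ham_path_iff strip_column) (simp add: column_path_def sg_adj_def)

lemma ham_path_insert_column: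
  assumes P: "ham_path V s t P" and e: "sublist [(d, y), (d, y')] P"
    and rows: "snd ` V \<subseteq> {1..3}" and c: "\<bar>c - d\<bar> = 1" "strip c c \<inter> V = {}"
  obtains Q where "ham_path (V \<union> strip c c) s t Q"
    and "sublist (column_path c) Q \<or> sublist (rev (column_path c)) Q"
    and "\<And>x. x \<noteq> d \<Longrightarrow> has_column_edge P x \<Longrightarrow> has_column_edge Q x"
proof -
  obtain A B where PAB: "P = A @ (d, y) # (d, y') # B"
    using e by (auto simp: sublist_def)
  have "sg_adj (d, y) (d, y')"
    using P unfolding PAB ham_path_iff by (simp add: successively_append_iff)
  moreover have "y \<in> {1..3}" "y' \<in> {1..3}"
    using P rows unfolding PAB ham_path_iff by force+
  ultimately have y: "y' = y + 1 \<and> y \<in> {1, 2} \<or> y = y' + 1 \<and> y' \<in> {1, 2}"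
    by (auto simp: sg_adj_def)
  define C where "C = (if y < y' then column_path c else rev (column_path c))"
  have "ham_path (strip c c) (hd C) (last C) C"
    using ham_path_column_path[of c] ham_path_rev[OF ham_path_column_path[of c]]
    by (simp add: C_def column_path_def)
  moreover have "sg_adj (d, y) (hd C)" "sg_adj (last C) (d, y')"
    using y c by (auto simp: C_def column_path_def sg_adj_def)
  ultimately have "ham_path (V \<union> strip c c) s t ((A @ [(d, y)]) @ C @ ((d, y') # B))"
    using P c(2) unfolding PAB by (intro ham_path_insert) (auto simp: Int_commute)
  moreover have "sublist C ((A @ [(d, y)]) @ C @ ((d, y') # B))"
    by (rule sublist_appendI)
  moreover have "has_column_edge ((A @ [(d, y)]) @ C @ ((d, y') # B)) x"
    if "x \<noteq> d" "has_column_edge P x" for x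
    using that sublist_pair_insert unfolding PAB has_column_edge_def by fastforce
  ultimately show thesis
    using that by (auto simp: C_def split: if_splits)
qed

definition boundary_ham_path :: "int \<Rightarrow> int \<Rightarrow> vertex \<Rightarrow> vertex \<Rightarrow> vertex list \<Rightarrow> bool" where
  "boundary_ham_path a b s t P \<longleftrightarrow>
     ham_path (strip a b) s t P \<and> has_column_edge P a \<and> has_column_edge P b"

lemma boundary_ham_path_rev:
  "boundary_ham_path a b s t P \<Longrightarrow> boundary_ham_path a b t s (rev P)"
  by (simp add: boundary_ham_path_def ham_path_rev has_column_edge_rev)

lemma boundary_ham_path_append:
  assumes "boundary_ham_path a k s u P" "boundary_ham_path l b v t Q" "sg_adj u v"
    and "a \<le> k" "l = k + 1" "l \<le> b"
  shows "boundary_ham_path a b s t (P @ Q)"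
  using assms ham_path_append[of "strip a k" s u P "strip l b" v t Q]
  by (simp add: boundary_ham_path_def strip_split has_column_edge_append)

lemma boundary_ham_path_extend_left:
  assumes P: "boundary_ham_path (a + 1) b s t P" and "a + 1 < b"
  obtains Q where "boundary_ham_path a b s t Q"
proof -
  obtain y y' where edge: "sublist [(a + 1, y), (a + 1, y')] P"
    using P by (auto simp: boundary_ham_path_def has_column_edge_def)
  have "ham_path (strip (a + 1) b) s t P" "\<bar>a - (a + 1)\<bar> = 1"
    "strip a a \<inter> strip (a + 1) b = {}"
    using P by (auto simp: boundary_ham_path_def strip_def)
  from ham_path_insert_column[OF this(1) edge strip_rows this(2,3)]
  obtain Q where "ham_path (strip (a + 1) b \<union> strip a a) s t Q"
    and "sublist (column_path a) Q \<or> sublist (rev (column_path a)) Q"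
    and "\<And>x. x \<noteq> a + 1 \<Longrightarrow> has_column_edge P x \<Longrightarrow> has_column_edge Q x"
    by blast
  then have "boundary_ham_path a b s t Q"
    using P \<open>a + 1 < b\<close> strip_split[of a a b]
    by (auto simp: boundary_ham_path_def Un_commute has_column_edge_if_sublist_column_path)
  then show thesis
    by (rule that)
qed

lemma boundary_ham_path_extend_right:
  assumes P: "boundary_ham_path a (b - 1) s t P" and "a < b - 1"
  obtains Q where "boundary_ham_path a b s t Q"
    and "sublist (column_path b) Q \<or> sublist (rev (column_path b)) Q"
proof -
  obtain y y' where edge: "sublist [(b - 1, y), (b - 1, y')] P"
    using P by (auto simp: boundary_ham_path_def has_column_edge_def)
  have "ham_path (strip a (b - 1)) s t P" "\<bar>b - (b - 1)\<bar> = 1"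
    "strip b b \<inter> strip a (b - 1) = {}"
    using P by (auto simp: boundary_ham_path_def strip_def)
  from ham_path_insert_column[OF this(1) edge strip_rows this(2,3)]
  obtain Q where "ham_path (strip a (b - 1) \<union> strip b b) s t Q"
    and column: "sublist (column_path b) Q \<or> sublist (rev (column_path b)) Q"
    and "\<And>x. x \<noteq> b - 1 \<Longrightarrow> has_column_edge P x \<Longrightarrow> has_column_edge Q x"
    by blast
  then have "boundary_ham_path a b s t Q"
    using P \<open>a < b - 1\<close> strip_split[of a "b - 1" b]
    by (auto simp: boundary_ham_path_def has_column_edge_if_sublist_column_path)
  then show thesis
    using column by (rule that)
qed

(* The excluded pair, the two middle vertices of a 2-column strip, has no Hamiltonian path
   joining it at all. *)
lemma boundary_ham_path_two_columns:
  assumes "s \<in> strip a (a + 1)" "t \<in> strip a (a + 1)" "s < t"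
    and "\<not> (snd s = 2 \<and> snd t = 2 \<and> fst s \<noteq> fst t)"
  shows "\<exists>P. boundary_ham_path a (a + 1) s t P"
proof -
  define Ps :: "vertex list list" where "Ps =
     [[(a, 1), (a + 1, 1), (a + 1, 2), (a + 1, 3), (a, 3), (a, 2)],
      [(a, 1), (a, 2), (a + 1, 1), (a + 1, 2), (a + 1, 3), (a, 3)],
      [(a, 2), (a, 1), (a + 1, 1), (a + 1, 2), (a + 1, 3), (a, 3)],
      [(a, 1), (a, 2), (a, 3), (a + 1, 3), (a + 1, 2), (a + 1, 1)],
      [(a, 1), (a + 1, 1), (a, 2), (a, 3), (a + 1, 3), (a + 1, 2)],
      [(a, 1), (a, 2), (a + 1, 1), (a + 1, 2), (a, 3), (a + 1, 3)],
      [(a, 2), (a, 3), (a + 1, 3), (a + 1, 2), (a, 1), (a + 1, 1)],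
      [(a, 2), (a, 1), (a + 1, 1), (a + 1, 2), (a, 3), (a + 1, 3)],
      [(a, 3), (a, 2), (a + 1, 3), (a + 1, 2), (a, 1), (a + 1, 1)],
      [(a, 3), (a + 1, 3), (a, 2), (a, 1), (a + 1, 1), (a + 1, 2)],
      [(a, 3), (a, 2), (a, 1), (a + 1, 1), (a + 1, 2), (a + 1, 3)],
      [(a + 1, 1), (a, 1), (a, 2), (a, 3), (a + 1, 3), (a + 1, 2)],
      [(a + 1, 1), (a, 1), (a, 2), (a, 3), (a + 1, 2), (a + 1, 3)],
      [(a + 1, 2), (a + 1, 1), (a, 1), (a, 2), (a, 3), (a + 1, 3)]]"
  have "\<forall>P \<in> set Ps. boundary_ham_path a (a + 1) (hd P) (last P) P"
    by (simp add: Ps_def boundary_ham_path_def ham_path_iff_card has_column_edge_Cons_Cons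
        has_column_edge_singleton strip_def sg_adj_def)
  moreover have "\<exists>P \<in> set Ps. hd P = s \<and> last P = t"
    using assms unfolding strip_two_columns by (elim SigmaE insertE emptyE; simp add: Ps_def)
  ultimately show ?thesis by blast
qed

lemma boundary_ham_path_three_columns:
  assumes "s \<in> strip a (a + 2)" "t \<in> strip a (a + 2)" "s < t"
    and "fst s = a \<and> fst t = a + 2 \<or> snd s = 2 \<and> snd t = 2"
  shows "\<exists>P. boundary_ham_path a (a + 2) s t P"
proof -
  define Ps :: "vertex list list" where "Ps =
     [[(a, 1), (a, 2), (a, 3), (a + 1, 2), (a + 1, 3), (a + 2, 3), (a + 2, 2), (a + 1, 1), (a + 2, 1)],
      [(a, 1), (a, 2), (a, 3), (a + 1, 3), (a + 2, 3), (a + 1, 2), (a + 1, 1), (a + 2, 1), (a + 2, 2)],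
      [(a, 1), (a, 2), (a, 3), (a + 1, 2), (a + 1, 1), (a + 2, 1), (a + 2, 2), (a + 1, 3), (a + 2, 3)],
      [(a, 2), (a, 1), (a + 1, 1), (a + 1, 2), (a, 3), (a + 1, 3), (a + 2, 3), (a + 2, 2), (a + 2, 1)],
      [(a, 2), (a, 1), (a + 1, 1), (a + 2, 1), (a + 1, 2), (a, 3), (a + 1, 3), (a + 2, 3), (a + 2, 2)],
      [(a, 2), (a, 1), (a + 1, 1), (a + 2, 1), (a + 1, 2), (a, 3), (a + 1, 3), (a + 2, 2), (a + 2, 3)],
      [(a, 3), (a, 2), (a, 1), (a + 1, 1), (a + 1, 2), (a + 1, 3), (a + 2, 3), (a + 2, 2), (a + 2, 1)],
      [(a, 3), (a, 2), (a, 1), (a + 1, 1), (a + 2, 1), (a + 1, 2), (a + 1, 3), (a + 2, 3), (a + 2, 2)],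
      [(a, 3), (a, 2), (a, 1), (a + 1, 1), (a + 1, 2), (a + 2, 1), (a + 2, 2), (a + 1, 3), (a + 2, 3)],
      [(a, 2), (a, 1), (a + 1, 1), (a + 2, 1), (a + 2, 2), (a + 2, 3), (a + 1, 3), (a, 3), (a + 1, 2)],
      [(a + 1, 2), (a + 2, 1), (a + 1, 1), (a, 1), (a, 2), (a, 3), (a + 1, 3), (a + 2, 3), (a + 2, 2)]]"
  have "\<forall>P \<in> set Ps. boundary_ham_path a (a + 2) (hd P) (last P) P"
    by (simp add: Ps_def boundary_ham_path_def ham_path_iff_card has_column_edge_Cons_Cons
        has_column_edge_singleton strip_def sg_adj_def)
  moreover have "\<exists>P \<in> set Ps. hd P = s \<and> last P = t"
    using assms unfolding strip_three_columns by (elim SigmaE insertE emptyE; simp add: Ps_def)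
  ultimately show ?thesis by blast
qed

(* s < t is the lexicographic order on vertices; it only serves to halve the base cases. *)
lemma boundary_ham_path_exists_ordered:
  assumes "a < b" "s \<in> strip a b" "t \<in> strip a b" "s < t"
    and "\<not> (b = a + 1 \<and> snd s = 2 \<and> snd t = 2 \<and> fst s \<noteq> fst t)"
  shows "\<exists>P. boundary_ham_path a b s t P"
  using assms
proof (induction "nat (b - a)" arbitrary: a b s t rule: less_induct)
  case less
  note IH = less.hyps and prems = less.prems
  have "fst s \<le> fst t"
    using \<open>s < t\<close> by (auto simp: less_prod_def)
  consider (two_columns) "b = a + 1"
    | (three_columns) "b = a + 2" "fst s = a \<and> fst t = b \<or> snd s = 2 \<and> snd t = 2"
    | (left) "a + 2 \<le> b" "a < fst s" "\<not> (b = a + 2 \<and> snd s = 2 \<and> snd t = 2)"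
    | (right) "a + 2 \<le> b" "fst t < b" "\<not> (b = a + 2 \<and> snd s = 2 \<and> snd t = 2)"
    | (opposite) "a + 3 \<le> b" "fst s = a" "fst t = b"
    using prems \<open>fst s \<le> fst t\<close> by (fastforce simp: mem_strip_iff)
  then show ?case
  proof cases
    case two_columns
    then show ?thesis
      using prems boundary_ham_path_two_columns by blast
  next
    case three_columns
    then show ?thesis
      using prems boundary_ham_path_three_columns by blast
  next
    case left
    have "\<exists>P. boundary_ham_path (a + 1) b s t P"
      using left prems \<open>fst s \<le> fst t\<close> by (intro IH) (auto simp: mem_strip_iff)
    moreover have "a + 1 < b"
      using left(1) by simp
    ultimately obtain Q where "boundary_ham_path a b s t Q"
      using boundary_ham_path_extend_left by blast
    then show ?thesis ..
  next
    case right
    have "\<exists>P. boundary_ham_path a (b - 1) s t P"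
      using right prems \<open>fst s \<le> fst t\<close> by (intro IH) (auto simp: mem_strip_iff)
    moreover have "a < b - 1"
      using right(1) by simp
    ultimately obtain Q where "boundary_ham_path a b s t Q"
      using boundary_ham_path_extend_right by blast
    then show ?thesis ..
  next
    case opposite
    have "\<exists>P. boundary_ham_path a (a + 1) s (a + 1, 1) P"
      using opposite prems by (intro IH) (auto simp: mem_strip_iff less_prod_def)
    moreover have "\<exists>Q. boundary_ham_path (a + 2) b (a + 2, 1) t Q"
      using opposite prems by (intro IH) (auto simp: mem_strip_iff less_prod_def)
    ultimately obtain P Q where
      "boundary_ham_path a (a + 1) s (a + 1, 1) P" "boundary_ham_path (a + 2) b (a + 2, 1) t Q"
      by blast
    then have "boundary_ham_path a b s t (P @ Q)"
      using opposite
      by (intro boundary_ham_path_append[where k = "a + 1" and l = "a + 2"]) (auto simp: sg_adj_def)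
    then show ?thesis ..
  qed
qed

lemma boundary_ham_path_exists:
  assumes "a < b" "s \<in> strip a b" "t \<in> strip a b" "s \<noteq> t"
    and "\<not> (b = a + 1 \<and> snd s = 2 \<and> snd t = 2 \<and> fst s \<noteq> fst t)"
  shows "\<exists>P. boundary_ham_path a b s t P"
proof (cases "s < t")
  case True
  then show ?thesis
    using assms boundary_ham_path_exists_ordered by blast
next
  case False
  then have "t < s"
    using \<open>s \<noteq> t\<close> by simp
  then obtain P where "boundary_ham_path a b t s P"
    using assms boundary_ham_path_exists_ordered[of a b t s] by auto
  then show ?thesis
    using boundary_ham_path_rev by blast
qed

lemma ham_path_through_last_column:
  assumes "3 \<le> m" "s \<in> strip 1 (m - 1)" "t \<in> strip 1 (m - 1)" "s \<noteq> t"
  shows "\<exists>P. ham_path (strip 1 m) s t P \<and>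
    (sublist (column_path m) P \<or> sublist (rev (column_path m)) P)"
proof (cases "m = 3 \<and> snd s = 2 \<and> snd t = 2")
  case True
  define W :: "vertex list"
    where "W = [(1, 2), (1, 1), (2, 1), (3, 1), (3, 2), (3, 3), (2, 3), (1, 3), (2, 2)]"
  have "ham_path (strip 1 3) (1, 2) (2, 2) W" "sublist (column_path 3) W"
    by (simp_all add: W_def ham_path_iff_card strip_def sg_adj_def column_path_def
        sublist_Cons_right)
  moreover have "s = (1, 2) \<and> t = (2, 2) \<or> s = (2, 2) \<and> t = (1, 2)"
    using assms True by (auto simp: mem_strip_iff prod_eq_iff)
  ultimately show ?thesis
    using True ham_path_rev by (metis sublist_rev)
next
  case False
  then obtain P where "boundary_ham_path 1 (m - 1) s t P"
    using assms boundary_ham_path_exists[of 1 "m - 1" s t] by auto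
  moreover have "1 < m - 1"
    using \<open>3 \<le> m\<close> by simp
  ultimately obtain Q where "boundary_ham_path 1 m s t Q"
    and "sublist (column_path m) Q \<or> sublist (rev (column_path m)) Q"
    by (rule boundary_ham_path_extend_right)
  then show ?thesis
    by (auto simp: boundary_ham_path_def)
qed

theorem lemma6:
  fixes m :: int and s t :: vertex
  assumes "m \<ge> 3"
    and "s \<in> rect m 3" and "t \<in> rect m 3" and "s \<noteq> t"
    and "{s, t} \<inter> {(m, 1), (m, 2), (m, 3)} = {}"
  shows "\<exists>P. ham_path (rect m 3) s t P \<and> path_has_edge P (m, 1) (m, 2)
              \<and> path_has_edge P (m, 2) (m, 3)"
proof -
  have rect: "rect m 3 = strip 1 m"
    by (auto simp: rect_def strip_def)
  have "s \<in> strip 1 (m - 1)" "t \<in> strip 1 (m - 1)"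
    using assms(2,3,5) unfolding rect mem_strip_iff by (auto simp: prod_eq_iff)
  then obtain P where P: "ham_path (strip 1 m) s t P"
    and column: "sublist (column_path m) P \<or> sublist (rev (column_path m)) P"
    using ham_path_through_last_column assms(1,4) by blast
  have "sublist [(m, 1), (m, 2)] (column_path m)" "sublist [(m, 2), (m, 3)] (column_path m)"
    "sublist [(m, 2), (m, 1)] (rev (column_path m))" "sublist [(m, 3), (m, 2)] (rev (column_path m))"
    by (simp_all add: column_path_def sublist_Cons_right)
  then have "path_has_edge P (m, 1) (m, 2) \<and> path_has_edge P (m, 2) (m, 3)"
    using column unfolding path_has_edge_iff by (meson sublist_order.order.trans)
  then show ?thesis
    using P rect by auto
qed

end
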